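(* Let $(G,E,\phi_c)$ be a twisted Exel–Pardo tuple. Then the Cohn algebra $C(G,E,\phi_c)$ is a free $\ell$-module with basis \[ \mathcal B=\{\alpha g\beta^*:\ \alpha,\beta\in\mathcal P(E),\ g\in G,\ g(r(\beta))=r(\alpha)\}. \]
   Context: $\ell$ is a commutative unital ring, $\mathcal U(\ell)$ its unit group. For a graph $E=(E^0,E^1,r,s)$, $\mathcal P(E)$ is the set of finite paths $e_1\cdots e_n$ ($r(e_i)=s(e_{i+1})$), including vertices as paths of length $0$; $s(e_1\cdots e_n)=s(e_1)$, $r(e_1\cdots e_n)=r(e_n)$. A twisted Exel–Pardo tuple $(G,E,\phi_c)$: a group $G$ acting on $E$ by graph automorphisms, a map $\phi:G\times E^1\to G$ with $\phi(gh,e)=\phi(g,h(e))\phi(h,e)$ and $\phi(g,e)(v)=g(v)$ for all $v\in E^0$, and $c:G\times E^1\to\mathcal U(\ell)$ with $c(gh,e)=c(g,h(e))c(h,e)$. $C(G,E,\phi_c)$ is the $\ell$-algebra generated by symbols $e,e^*$ ($e\in E^1$) and $vg$ ($v\in E^0$, $g\in G$), writing $v:=v1$, subject to (for all $v,w,e,f,g,h$): $e=s(e)er(e)$, $e^*=r(e)e^*s(e)$, $e^*f=\delta_{e,f}r(e)$, $(vg)(wh)=\delta_{v,g(w)}v(gh)$, $(vg)e=\delta_{v,g(s(e))}c(g,e)\,g(e)(r(g(e))\phi(g,e))$, $e^*(vg)=\delta_{v,s(e)}c(g,g^{-1}(e))(r(e)\phi(g,g^{-1}(e)))(g^{-1}(e))^*$.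 For a path $\alpha=e_1\cdots e_n$ also write $\alpha$ for the product $e_1\cdots e_n$ in this algebra and $\alpha^*=e_n^*\cdots e_1^*$ (for a vertex $v$, $v^*=v$); for $\alpha,\beta\in\mathcal P(E)$, $g\in G$ with $g(r(\beta))=r(\alpha)$, put $\alpha g\beta^*:=\alpha\,(r(\alpha)g)\,\beta^*$. *)

theory Defs
  imports Main
begin

text \<open>The graph E has vertex type 'v and edge type 'e (E^0 = UNIV, E^1 = UNIV),
range and source maps r, s. The group G is a type of class group_add, written ADDITIVELY:
the product gh is g + h, the unit is 0, the inverse of g is -g.\<close>

definition twisted_EP_tuple ::
  "('e \<Rightarrow> 'v) \<Rightarrow> ('e \<Rightarrow> 'v) \<Rightarrow> ('g::group_add \<Rightarrow> 'v \<Rightarrow> 'v) \<Rightarrow> ('g \<Rightarrow> 'e \<Rightarrow> 'e)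
   \<Rightarrow> ('g \<Rightarrow> 'e \<Rightarrow> 'g) \<Rightarrow> ('g \<Rightarrow> 'e \<Rightarrow> 'l::comm_ring_1) \<Rightarrow> bool" where
  "twisted_EP_tuple r s av ae phi c \<longleftrightarrow>
     \<comment> \<open>G acts on E by graph automorphisms\<close>
     av 0 = id \<and> ae 0 = id \<and>
     (\<forall>g h. av (g + h) = av g \<circ> av h) \<and> (\<forall>g h. ae (g + h) = ae g \<circ> ae h) \<and>
     (\<forall>g. bij (av g) \<and> bij (ae g)) \<and>
     (\<forall>g e. s (ae g e) = av g (s e) \<and> r (ae g e) = av g (r e)) \<and>
     \<comment> \<open>the cocycle phi\<close>
     (\<forall>g h e. phi (g + h) e = phi g (ae h e) + phi h e) \<and>
     (\<forall>g e v. av (phi g e) v = av g v) \<and>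
     \<comment> \<open>the unit-valued cocycle c\<close>
     (\<forall>g e. c g e dvd 1) \<and>
     (\<forall>g h e. c (g + h) e = c g (ae h e) * c h e)"

text \<open>Generators of the Cohn algebra: e, e^*, and (v g).\<close>
datatype ('v,'e,'g) cgen = Ed 'e | Ghost 'e | VG 'v 'g

text \<open>The free (non-unital) ell-algebra on the generators: ell-valued functions on words,
with finite support on non-empty words; product = convolution along concatenation.\<close>
type_synonym ('v,'e,'g,'l) falg = "('v,'e,'g) cgen list \<Rightarrow> 'l"

definition fzero :: "('v,'e,'g,'l::comm_ring_1) falg" where "fzero = (\<lambda>w. 0)"
definition fadd :: "('v,'e,'g,'l::comm_ring_1) falg \<Rightarrow> ('v,'e,'g,'l) falg \<Rightarrow> ('v,'e,'g,'l) falg"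
  where "fadd x y = (\<lambda>w. x w + y w)"
definition fdiff :: "('v,'e,'g,'l::comm_ring_1) falg \<Rightarrow> ('v,'e,'g,'l) falg \<Rightarrow> ('v,'e,'g,'l) falg"
  where "fdiff x y = (\<lambda>w. x w - y w)"
definition fsmult :: "'l::comm_ring_1 \<Rightarrow> ('v,'e,'g,'l) falg \<Rightarrow> ('v,'e,'g,'l) falg"
  where "fsmult a x = (\<lambda>w. a * x w)"
definition fmul :: "('v,'e,'g,'l::comm_ring_1) falg \<Rightarrow> ('v,'e,'g,'l) falg \<Rightarrow> ('v,'e,'g,'l) falg"
  where "fmul x y = (\<lambda>w. \<Sum>i\<le>length w. x (take i w) * y (drop i w))"
definition mono :: "'l::comm_ring_1 \<Rightarrow> ('v,'e,'g) cgen list \<Rightarrow> ('v,'e,'g,'l) falg"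
  where "mono a u = (\<lambda>w. if w = u then a else 0)"

abbreviation wd :: "('v,'e,'g) cgen list \<Rightarrow> ('v,'e,'g,'l::comm_ring_1) falg"
  where "wd u \<equiv> mono 1 u"

text \<open>The defining relations of C(G,E,phi_c), each as (lhs - rhs); recall v := v0.\<close>
inductive_set cohn_relators ::
  "('e \<Rightarrow> 'v) \<Rightarrow> ('e \<Rightarrow> 'v) \<Rightarrow> ('g::group_add \<Rightarrow> 'v \<Rightarrow> 'v) \<Rightarrow> ('g \<Rightarrow> 'e \<Rightarrow> 'e)
   \<Rightarrow> ('g \<Rightarrow> 'e \<Rightarrow> 'g) \<Rightarrow> ('g \<Rightarrow> 'e \<Rightarrow> 'l::comm_ring_1) \<Rightarrow> ('v,'e,'g,'l) falg set"
  for r s av ae phi c where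
  rel1: "fdiff (wd [Ed e]) (wd [VG (s e) 0, Ed e, VG (r e) 0]) \<in> cohn_relators r s av ae phi c"
| rel2: "fdiff (wd [Ghost e]) (wd [VG (r e) 0, Ghost e, VG (s e) 0]) \<in> cohn_relators r s av ae phi c"
| rel3: "fdiff (wd [Ghost e, Ed f]) (if e = f then wd [VG (r e) 0] else fzero)
           \<in> cohn_relators r s av ae phi c"
| rel4: "fdiff (wd [VG v g, VG w h]) (if v = av g w then wd [VG v (g + h)] else fzero)
           \<in> cohn_relators r s av ae phi c"
| rel5: "fdiff (wd [VG v g, Ed e])
           (if v = av g (s e) then fsmult (c g e) (wd [Ed (ae g e), VG (r (ae g e)) (phi g e)])
            else fzero) \<in> cohn_relators r s av ae phi c"
| rel6: "fdiff (wd [Ghost e, VG v g])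
           (if v = s e then fsmult (c g (ae (-g) e)) (wd [VG (r e) (phi g (ae (-g) e)), Ghost (ae (-g) e)])
            else fzero) \<in> cohn_relators r s av ae phi c"

inductive_set ideal_gen :: "('v,'e,'g,'l::comm_ring_1) falg set \<Rightarrow> ('v,'e,'g,'l) falg set"
  for R where
  gen: "x \<in> R \<Longrightarrow> x \<in> ideal_gen R"
| zero: "fzero \<in> ideal_gen R"
| add: "x \<in> ideal_gen R \<Longrightarrow> y \<in> ideal_gen R \<Longrightarrow> fadd x y \<in> ideal_gen R"
| mul: "x \<in> ideal_gen R \<Longrightarrow> fmul (fmul (mono a u) x) (mono 1 v) \<in> ideal_gen R"

definition cohn_ideal where
  "cohn_ideal r s av ae phi c = ideal_gen (cohn_relators r s av ae phi c)"

text \<open>Finite paths: a pair (v, es); (v, []) is the vertex v, and (v, e1...en) with n > 0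
is the edge path e1...en, where v = s(e1) (so v is determined by the edges).\<close>
type_synonym ('v,'e) path = "'v \<times> 'e list"

definition is_path :: "('e \<Rightarrow> 'v) \<Rightarrow> ('e \<Rightarrow> 'v) \<Rightarrow> ('v,'e) path \<Rightarrow> bool" where
  "is_path r s p \<longleftrightarrow> (case p of (v, es) \<Rightarrow>
     es = [] \<or> (s (hd es) = v \<and> (\<forall>i. Suc i < length es \<longrightarrow> r (es ! i) = s (es ! Suc i))))"

definition prange :: "('e \<Rightarrow> 'v) \<Rightarrow> ('v,'e) path \<Rightarrow> 'v" where
  "prange r p = (case p of (v, es) \<Rightarrow> if es = [] then v else r (last es))"

definition pword :: "('v,'e) path \<Rightarrow> ('v,'e,'g::group_add) cgen list" where
  "pword p = (case p of (v, es) \<Rightarrow> if es = [] then [VG v 0] else map Ed es)"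
definition pword_star :: "('v,'e) path \<Rightarrow> ('v,'e,'g::group_add) cgen list" where
  "pword_star p = (case p of (v, es) \<Rightarrow> if es = [] then [VG v 0] else rev (map Ghost es))"

definition basis_idx :: "('e \<Rightarrow> 'v) \<Rightarrow> ('e \<Rightarrow> 'v) \<Rightarrow> ('g::group_add \<Rightarrow> 'v \<Rightarrow> 'v)
    \<Rightarrow> (('v,'e) path \<times> 'g \<times> ('v,'e) path) set" where
  "basis_idx r s av = {(a, g, b). is_path r s a \<and> is_path r s b \<and> av g (prange r b) = prange r a}"

definition basis_elt :: "('e \<Rightarrow> 'v) \<Rightarrow> (('v,'e) path \<times> 'g::group_add \<times> ('v,'e) path)
    \<Rightarrow> ('v,'e,'g,'l::comm_ring_1) falg" where
  "basis_elt r t = (case t of (a, g, b) \<Rightarrow>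
     fmul (fmul (wd (pword a)) (wd [VG (prange r a) g])) (wd (pword_star b)))"

definition lincomb :: "('e \<Rightarrow> 'v) \<Rightarrow> (('v,'e) path \<times> 'g::group_add \<times> ('v,'e) path \<Rightarrow> 'l::comm_ring_1)
    \<Rightarrow> ('v,'e,'g,'l) falg" where
  "lincomb r k = (\<lambda>w. \<Sum>t\<in>{t. k t \<noteq> 0}. k t * basis_elt r t w)"

end

theory Submission
  imports Defs
begin

text \<open>Multiplying \<open>\<alpha> g \<beta>\<^sup>*\<close> on the left by a generator gives, by the defining relations,
  a scalar multiple of another such element (or zero); by induction every word is congruent
  to a multiple of a single basis element, so the basis spans. Read as a left action of the
  generators on scalar multiples of basis elements, the same reduction respects every defining
  relation. Hence the coefficient of a fixed basis element in the normal form of \<open>u x v\<close> is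
  a linear functional of \<open>x\<close> vanishing on the ideal of relations, while on a combination of
  basis words it returns the corresponding coefficient: the basis is linearly independent.\<close>

section \<open>Words in the free algebra\<close>

lemma fmul_mono_left:
  "fmul (Defs.mono a u) y w = (if take (length u) w = u then a * y (drop (length u) w) else 0)"
proof -
  have "fmul (Defs.mono a u) y w =
      (\<Sum>i\<le>length w. if i = length u \<and> take (length u) w = u then a * y (drop (length u) w) else 0)"
    unfolding fmul_def Defs.mono_def by (rule sum.cong) auto
  also have "\<dots> = (if take (length u) w = u then a * y (drop (length u) w) else 0)"
  proof (cases "take (length u) w = u")
    case True
    then have "length u \<le> length w" by (metis length_take min.absorb_iff1 min.commute)
    with True show ?thesis by (simp add: sum.delta)
  qed simp
  finally show ?thesis .
qed

lemma fmul_mono_right: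
  "fmul x (Defs.mono b v) w = (if length v \<le> length w \<and> drop (length w - length v) w = v
     then x (take (length w - length v) w) * b else 0)"
proof -
  let ?P = "length v \<le> length w \<and> drop (length w - length v) w = v"
  have "fmul x (Defs.mono b v) w =
      (\<Sum>i\<le>length w. if i = length w - length v \<and> ?P then x (take (length w - length v) w) * b else 0)"
    unfolding fmul_def Defs.mono_def by (rule sum.cong) auto
  also have "\<dots> = (if ?P then x (take (length w - length v) w) * b else 0)"
    by (cases ?P) (auto simp: sum.delta intro: sum.neutral)
  finally show ?thesis .
qed

definition sandwich :: "'l::comm_ring_1 \<Rightarrow> ('v,'e,'g) cgen list \<Rightarrow> ('v,'e,'g,'l) falg
    \<Rightarrow> ('v,'e,'g) cgen list \<Rightarrow> ('v,'e,'g,'l) falg" where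
  "sandwich a u x v = fmul (fmul (Defs.mono a u) x) (Defs.mono 1 v)"

lemma sandwich_append: "sandwich a u x v (u @ w @ v) = a * x w"
  unfolding sandwich_def fmul_mono_right fmul_mono_left by simp

lemma sandwich_outside:
  assumes "\<nexists>w. w' = u @ w @ v"
  shows "sandwich a u x v w' = 0"
proof -
  have False if "length v \<le> length w'" "drop (length w' - length v) w' = v"
    and "take (length u) (take (length w' - length v) w') = u"
  proof -
    let ?m = "take (length w' - length v) w'"
    have "w' = ?m @ v" using that(2) by (metis append_take_drop_id)
    moreover have "?m = u @ drop (length u) ?m" using that(3) by (metis append_take_drop_id)
    ultimately show False using assms by (metis append.assoc)
  qed
  then show ?thesis unfolding sandwich_def fmul_mono_right fmul_mono_left by auto
qed

lemma sandwich_mono: "sandwich a u (Defs.mono b w) v = Defs.mono (a * b) (u @ w @ v)"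
proof
  fix w'
  show "sandwich a u (Defs.mono b w) v w' = Defs.mono (a * b) (u @ w @ v) w'"
  proof (cases "\<exists>w0. w' = u @ w0 @ v")
    case True
    then obtain w0 where "w' = u @ w0 @ v" by blast
    then show ?thesis by (simp add: sandwich_append Defs.mono_def)
  next
    case False
    then show ?thesis by (auto simp: sandwich_outside Defs.mono_def)
  qed
qed

lemma sandwich_fdiff: "sandwich a u (fdiff x y) v = fdiff (sandwich a u x v) (sandwich a u y v)"
proof
  fix w'
  show "sandwich a u (fdiff x y) v w' = fdiff (sandwich a u x v) (sandwich a u y v) w'"
  proof (cases "\<exists>w0. w' = u @ w0 @ v")
    case True
    then show ?thesis by (auto simp: sandwich_append fdiff_def right_diff_distrib)
  next
    case False
    then show ?thesis by (simp add: sandwich_outside fdiff_def)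
  qed
qed

lemma sandwich_Nil: "sandwich a [] x [] = fsmult a x"
  using sandwich_append[of a "[]" x "[]"] by (auto simp: fsmult_def)

lemma ideal_gen_sandwich: "x \<in> ideal_gen R \<Longrightarrow> sandwich a u x v \<in> ideal_gen R"
  unfolding sandwich_def by (rule ideal_gen.mul)

lemma ideal_gen_smult: "x \<in> ideal_gen R \<Longrightarrow> fsmult a x \<in> ideal_gen R"
  using ideal_gen_sandwich[of x R a "[]" "[]"] by (simp add: sandwich_Nil)

lemma ideal_gen_sum:
  "finite S \<Longrightarrow> (\<And>i. i \<in> S \<Longrightarrow> f i \<in> ideal_gen R) \<Longrightarrow> (\<lambda>w. \<Sum>i\<in>S. f i w) \<in> ideal_gen R"
proof (induction S rule: finite_induct)
  case empty
  then show ?case using ideal_gen.zero[of R] by (simp add: fzero_def)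
next
  case (insert i S)
  then have "fadd (f i) (\<lambda>w. \<Sum>i\<in>S. f i w) \<in> ideal_gen R" by (intro ideal_gen.add) auto
  with insert show ?case by (simp add: fadd_def)
qed

definition word_cong :: "('v,'e,'g,'l::comm_ring_1) falg set \<Rightarrow> ('v,'e,'g) cgen list \<Rightarrow> 'l
    \<Rightarrow> ('v,'e,'g) cgen list \<Rightarrow> bool" where
  "word_cong R w a w' \<longleftrightarrow> fdiff (Defs.mono 1 w) (Defs.mono a w') \<in> ideal_gen R"

lemma word_cong_relator: "fdiff (Defs.mono 1 w) (Defs.mono a w') \<in> R \<Longrightarrow> word_cong R w a w'"
  unfolding word_cong_def by (rule ideal_gen.gen)

lemma word_cong_refl: "word_cong R w 1 w"
proof -
  have "fdiff (Defs.mono 1 w) (Defs.mono 1 w) = fzero" by (auto simp: fdiff_def fzero_def)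
  then show ?thesis unfolding word_cong_def by (metis ideal_gen.zero)
qed

lemma word_cong_sym: "word_cong R w 1 w' \<Longrightarrow> word_cong R w' 1 w"
  unfolding word_cong_def
proof -
  assume "fdiff (Defs.mono 1 w) (Defs.mono 1 w') \<in> ideal_gen R"
  then have "fsmult (-1) (fdiff (Defs.mono 1 w) (Defs.mono 1 w')) \<in> ideal_gen R"
    by (rule ideal_gen_smult)
  moreover have
    "fsmult (-1) (fdiff (Defs.mono 1 w) (Defs.mono 1 w')) = fdiff (Defs.mono 1 w') (Defs.mono 1 w)"
    by (auto simp: fsmult_def fdiff_def)
  ultimately show "fdiff (Defs.mono 1 w') (Defs.mono 1 w) \<in> ideal_gen R" by metis
qed

lemma word_cong_trans: "word_cong R w1 b w2 \<Longrightarrow> word_cong R w2 a w3 \<Longrightarrow> word_cong R w1 (b * a) w3"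
  unfolding word_cong_def
proof -
  assume "fdiff (Defs.mono 1 w1) (Defs.mono b w2) \<in> ideal_gen R"
    and "fdiff (Defs.mono 1 w2) (Defs.mono a w3) \<in> ideal_gen R"
  then have "fadd (fdiff (Defs.mono 1 w1) (Defs.mono b w2))
      (fsmult b (fdiff (Defs.mono 1 w2) (Defs.mono a w3))) \<in> ideal_gen R"
    by (intro ideal_gen.add ideal_gen_smult)
  moreover have "fadd (fdiff (Defs.mono 1 w1) (Defs.mono b w2))
      (fsmult b (fdiff (Defs.mono 1 w2) (Defs.mono a w3))) = fdiff (Defs.mono 1 w1) (Defs.mono (b * a) w3)"
    by (auto simp: fadd_def fsmult_def fdiff_def Defs.mono_def algebra_simps)
  ultimately show "fdiff (Defs.mono 1 w1) (Defs.mono (b * a) w3) \<in> ideal_gen R" by simp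
qed

lemma word_cong_context: "word_cong R w a w' \<Longrightarrow> word_cong R (u @ w @ v) a (u @ w' @ v)"
  unfolding word_cong_def
  using ideal_gen_sandwich[of "fdiff (Defs.mono 1 w) (Defs.mono a w')" R 1 u v]
  by (simp add: sandwich_fdiff sandwich_mono)

lemma word_cong_append_left: "word_cong R w a w' \<Longrightarrow> word_cong R (u @ w) a (u @ w')"
  using word_cong_context[of R w a w' u "[]"] by simp

lemma word_cong_append_right: "word_cong R w a w' \<Longrightarrow> word_cong R (w @ v) a (w' @ v)"
  using word_cong_context[of R w a w' "[]" v] by simp

lemma word_cong_Cons: "word_cong R w a w' \<Longrightarrow> word_cong R (x # w) a (x # w')"
  using word_cong_context[of R w a w' "[x]" "[]"] by simp

lemma word_cong_zero: "word_cong R w 0 w' \<Longrightarrow> word_cong R (u @ w @ v) 0 w''"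
proof -
  have mono_zero: "Defs.mono 0 w = fzero" for w :: "('v,'e,'g) cgen list"
    by (auto simp: fzero_def Defs.mono_def)
  assume "word_cong R w 0 w'"
  then have "word_cong R (u @ w @ v) 0 (u @ w' @ v)" by (rule word_cong_context)
  then show ?thesis unfolding word_cong_def mono_zero .
qed

lemma fdiff_sum_word_cong_in_ideal_gen:
  assumes fin: "finite S" and supp: "{w. x w \<noteq> 0} \<subseteq> S"
    and cong: "\<And>w. w \<in> S \<Longrightarrow> word_cong R w (a w) (u w)"
  shows "fdiff x (\<lambda>w'. \<Sum>w\<in>S. x w * a w * Defs.mono 1 (u w) w') \<in> ideal_gen R"
proof -
  have x: "x w' = (\<Sum>w\<in>S. x w * Defs.mono 1 w w')" for w'
  proof -
    have "(\<Sum>w\<in>S. x w * Defs.mono 1 w w') = (\<Sum>w\<in>S. if w = w' then x w' else 0)"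
      by (rule sum.cong) (auto simp: Defs.mono_def)
    also have "\<dots> = x w'" using fin supp by (auto simp: sum.delta')
    finally show ?thesis by simp
  qed
  have "fdiff x (\<lambda>w'. \<Sum>w\<in>S. x w * a w * Defs.mono 1 (u w) w') =
      (\<lambda>w'. \<Sum>w\<in>S. fsmult (x w) (fdiff (Defs.mono 1 w) (Defs.mono (a w) (u w))) w')"
  proof
    fix w'
    have "fdiff x (\<lambda>w'. \<Sum>w\<in>S. x w * a w * Defs.mono 1 (u w) w') w' =
        (\<Sum>w\<in>S. x w * Defs.mono 1 w w') - (\<Sum>w\<in>S. x w * a w * Defs.mono 1 (u w) w')"
      unfolding fdiff_def by (subst x) simp
    also have "\<dots> = (\<Sum>w\<in>S. fsmult (x w) (fdiff (Defs.mono 1 w) (Defs.mono (a w) (u w))) w')"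
      unfolding sum_subtractf[symmetric]
      by (rule sum.cong) (auto simp: fsmult_def fdiff_def Defs.mono_def algebra_simps)
    finally show "fdiff x (\<lambda>w'. \<Sum>w\<in>S. x w * a w * Defs.mono 1 (u w) w') w' =
        (\<Sum>w\<in>S. fsmult (x w) (fdiff (Defs.mono 1 w) (Defs.mono (a w) (u w))) w')" .
  qed
  also have "\<dots> \<in> ideal_gen R"
    using fin cong unfolding word_cong_def by (intro ideal_gen_sum ideal_gen_smult)
  finally show ?thesis .
qed

section \<open>Consequences of the axioms\<close>

locale twisted_EP =
  fixes r s :: "'e \<Rightarrow> 'v" and av :: "'g::group_add \<Rightarrow> 'v \<Rightarrow> 'v" and ae :: "'g \<Rightarrow> 'e \<Rightarrow> 'e"
    and phi :: "'g \<Rightarrow> 'e \<Rightarrow> 'g" and c :: "'g \<Rightarrow> 'e \<Rightarrow> 'l::comm_ring_1"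
  assumes tuple: "twisted_EP_tuple r s av ae phi c"
begin

lemma av_zero [simp]: "av 0 x = x" using tuple unfolding twisted_EP_tuple_def by simp
lemma ae_zero [simp]: "ae 0 x = x" using tuple unfolding twisted_EP_tuple_def by simp
lemma av_add: "av (g + h) x = av g (av h x)" using tuple unfolding twisted_EP_tuple_def by simp
lemma ae_add: "ae (g + h) x = ae g (ae h x)" using tuple unfolding twisted_EP_tuple_def by simp
lemma s_ae [simp]: "s (ae g e) = av g (s e)" using tuple unfolding twisted_EP_tuple_def by simp
lemma r_ae [simp]: "r (ae g e) = av g (r e)" using tuple unfolding twisted_EP_tuple_def by simp
lemma phi_add: "phi (g + h) e = phi g (ae h e) + phi h e"
  using tuple unfolding twisted_EP_tuple_def by simp
lemma av_phi [simp]: "av (phi g e) v = av g v" using tuple unfolding twisted_EP_tuple_def by simp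
lemma c_add: "c (g + h) e = c g (ae h e) * c h e" using tuple unfolding twisted_EP_tuple_def by simp
lemma c_unit: "c g e dvd 1" using tuple unfolding twisted_EP_tuple_def by simp

lemma av_minus_cancel [simp]: "av g (av (- g) x) = x" using av_add[of g "-g" x] by simp
lemma av_cancel_minus [simp]: "av (- g) (av g x) = x" using av_add[of "-g" g x] by simp
lemma ae_minus_cancel [simp]: "ae g (ae (- g) x) = x" using ae_add[of g "-g" x] by simp
lemma ae_cancel_minus [simp]: "ae (- g) (ae g x) = x" using ae_add[of "-g" g x] by simp
lemma av_inj: "av g x = av g y \<longleftrightarrow> x = y" by (metis av_cancel_minus)
lemma av_diff: "av (a - b) x = av a (av (-b) x)" by (simp add: av_add[symmetric])
lemma ae_diff: "ae (a - b) x = ae a (ae (-b) x)" by (simp add: ae_add[symmetric])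
lemma av_eq_minus: "av g x = y \<Longrightarrow> av (-g) y = x" by auto
lemma av_minus_phi [simp]: "av (- phi g e) (av g x) = x" by (metis av_cancel_minus av_phi)

lemma c_zero [simp]: "c 0 e = 1"
proof -
  have idem: "c 0 e * c 0 e = c 0 e" by (metis c_add add.right_neutral ae_zero)
  obtain k where k: "1 = c 0 e * k" using c_unit[of 0 e] by (auto elim: dvdE)
  have "c 0 e = c 0 e * (c 0 e * k)" using k by simp
  also have "\<dots> = 1" by (metis idem k mult.assoc)
  finally show ?thesis .
qed

lemma phi_zero [simp]: "phi 0 e = 0"
proof -
  have "phi 0 e + phi 0 e = phi 0 e + 0" by (metis phi_add add.right_neutral ae_zero)
  then show ?thesis by (rule add_left_imp_eq)
qed

fun edge_chain :: "'e list \<Rightarrow> bool" where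
  "edge_chain [] = True"
| "edge_chain [e] = True"
| "edge_chain (e1 # e2 # es) = (r e1 = s e2 \<and> edge_chain (e2 # es))"

lemma edge_chain_iff_nth:
  "edge_chain es \<longleftrightarrow> (\<forall>i. Suc i < length es \<longrightarrow> r (es ! i) = s (es ! Suc i))"
proof (induction es rule: edge_chain.induct)
  case (3 e1 e2 es)
  have "(\<forall>i. Suc i < length (e1 # e2 # es) \<longrightarrow> r ((e1 # e2 # es) ! i) = s ((e1 # e2 # es) ! Suc i))
      \<longleftrightarrow> r e1 = s e2 \<and> (\<forall>i. Suc i < length (e2 # es) \<longrightarrow> r ((e2 # es) ! i) = s ((e2 # es) ! Suc i))"
    by (auto simp: nth_Cons split: nat.splits)
  with 3 show ?case by simp
qed auto

lemma is_path_iff: "is_path r s (v, es) \<longleftrightarrow> es = [] \<or> (s (hd es) = v \<and> edge_chain es)"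
  unfolding is_path_def edge_chain_iff_nth by simp

lemma prange_eq: "prange r (v, es) = (if es = [] then v else r (last es))"
  unfolding prange_def by simp

lemma edge_chain_snoc: "edge_chain (es @ [e]) \<longleftrightarrow> edge_chain es \<and> (es \<noteq> [] \<longrightarrow> r (last es) = s e)"
  by (induction es rule: edge_chain.induct) auto

text \<open>With \<open>path_act h \<alpha> = h \<alpha>\<close>, \<open>path_phi h \<alpha> = \<phi>(h, \<alpha>)\<close> and \<open>path_c h \<alpha> = c(h, \<alpha>)\<close>,
  relation (5) iterates to \<open>(v h) \<alpha> = c(h, \<alpha>) (h \<alpha>) (r(h \<alpha>) \<phi>(h, \<alpha>))\<close>.\<close>

fun path_act :: "'g \<Rightarrow> 'e list \<Rightarrow> 'e list" where
  "path_act h [] = []"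
| "path_act h (e # es) = ae h e # path_act (phi h e) es"

fun path_phi :: "'g \<Rightarrow> 'e list \<Rightarrow> 'g" where
  "path_phi h [] = h"
| "path_phi h (e # es) = path_phi (phi h e) es"

fun path_c :: "'g \<Rightarrow> 'e list \<Rightarrow> 'l" where
  "path_c h [] = 1"
| "path_c h (e # es) = c h e * path_c (phi h e) es"

lemma path_act_zero [simp]: "path_act 0 es = es" by (induction es) auto
lemma path_phi_zero [simp]: "path_phi 0 es = 0" by (induction es) auto
lemma path_c_zero [simp]: "path_c 0 es = 1" by (induction es) auto

lemma path_act_add: "path_act (g + h) es = path_act g (path_act h es)"
  by (induction es arbitrary: g h) (auto simp: ae_add phi_add)

lemma path_phi_add: "path_phi (g + h) es = path_phi g (path_act h es) + path_phi h es"
  by (induction es arbitrary: g h) (auto simp: phi_add)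

lemma path_c_add: "path_c (g + h) es = path_c g (path_act h es) * path_c h es"
  by (induction es arbitrary: g h) (auto simp: phi_add c_add algebra_simps)

lemma path_act_eq_Nil [simp]: "path_act h es = [] \<longleftrightarrow> es = []"
  by (cases es) auto

lemma hd_path_act: "es \<noteq> [] \<Longrightarrow> hd (path_act h es) = ae h (hd es)"
  by (cases es) auto

lemma r_last_path_act: "es \<noteq> [] \<Longrightarrow> r (last (path_act h es)) = av h (r (last es))"
  by (induction es arbitrary: h) auto

lemma edge_chain_path_act: "edge_chain es \<Longrightarrow> edge_chain (path_act h es)"
  by (induction es arbitrary: h rule: edge_chain.induct) auto

lemma av_path_phi [simp]: "av (path_phi h es) x = av h x"
  by (induction es arbitrary: h) auto

end

section \<open>The left action of the generators on basis elements\<close>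

type_synonym ('v,'e,'g) bidx = "('v,'e) path \<times> 'g \<times> ('v,'e) path"

text \<open>A state \<open>(a, Some (\<alpha>, g, \<beta>))\<close> stands for the vector \<open>a \<alpha> g \<beta>\<^sup>*\<close>, and \<open>(a, None)\<close> for
  \<open>a\<close> times the empty product; all states with coefficient \<open>0\<close> stand for the zero vector.\<close>

definition scale_state :: "'l::comm_ring_1 \<Rightarrow> 'l \<times> 'x \<Rightarrow> 'l \<times> 'x" where
  "scale_state b p = (b * fst p, snd p)"

definition same_vector :: "'l::comm_ring_1 \<times> 'x \<Rightarrow> 'l \<times> 'x \<Rightarrow> bool" where
  "same_vector p q \<longleftrightarrow> (fst p = 0 \<and> fst q = 0) \<or> p = q"

definition state_coeff :: "'l::comm_ring_1 \<times> 'x option \<Rightarrow> 'x \<Rightarrow> 'l" where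
  "state_coeff p t = (case snd p of Some t' \<Rightarrow> if t' = t then fst p else 0 | None \<Rightarrow> 0)"

lemma same_vector_scale_state: "same_vector p q \<Longrightarrow> same_vector (scale_state b p) (scale_state b q)"
  unfolding same_vector_def scale_state_def by auto

lemma state_coeff_same_vector: "same_vector p q \<Longrightarrow> state_coeff p t = state_coeff q t"
  unfolding same_vector_def state_coeff_def by (auto split: option.splits)

lemma state_coeff_scale_state: "state_coeff (scale_state b p) t = b * state_coeff p t"
  unfolding scale_state_def state_coeff_def by (auto split: option.splits)

context twisted_EP
begin

text \<open>On the empty product \<open>None\<close> a generator produces its own normal form:
  \<open>e = e (r(e) 0)\<close>, \<open>e\<^sup>* = (r(e) 0) e\<^sup>*\<close> and \<open>v h = (v h) h\<^sup>-\<^sup>1(v)\<close>. A ghost edge hitting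
  \<open>\<alpha> g \<beta>\<^sup>*\<close> with \<open>\<alpha>\<close> a vertex passes \<open>g\<close> by relation (6) and is appended to \<open>\<beta>\<close>.\<close>

fun gen_act :: "('v,'e,'g) cgen \<Rightarrow> ('v,'e,'g) bidx option \<Rightarrow> 'l \<times> ('v,'e,'g) bidx option" where
  "gen_act (Ed e) None = (1, Some ((s e, [e]), 0, (r e, [])))"
| "gen_act (Ghost e) None = (1, Some ((r e, []), 0, (s e, [e])))"
| "gen_act (VG v h) None = (1, Some ((v, []), h, (av (-h) v, [])))"
| "gen_act (Ed e) (Some ((w, es), g, b)) =
     (if r e = w then (1, Some ((s e, e # es), g, b)) else (0, Some ((w, es), g, b)))"
| "gen_act (Ghost e) (Some ((w, es), g, b)) =
     (case es of
       [] \<Rightarrow> if w = s e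
             then (c g (ae (-g) e), Some ((r e, []), phi g (ae (-g) e), (fst b, snd b @ [ae (-g) e])))
             else (0, Some ((w, es), g, b))
     | e' # es' \<Rightarrow> if e = e' then (1, Some ((r e, es'), g, b)) else (0, Some ((w, es), g, b)))"
| "gen_act (VG v h) (Some ((w, es), g, b)) =
     (if v = av h w then (path_c h es, Some ((v, path_act h es), path_phi h es + g, b))
      else (0, Some ((w, es), g, b)))"

definition act_step :: "('v,'e,'g) cgen \<Rightarrow> 'l \<times> ('v,'e,'g) bidx option \<Rightarrow> 'l \<times> ('v,'e,'g) bidx option"
  where "act_step x p = (fst p * fst (gen_act x (snd p)), snd (gen_act x (snd p)))"

fun word_act :: "('v,'e,'g) cgen list \<Rightarrow> 'l \<times> ('v,'e,'g) bidx option \<Rightarrow> 'l \<times> ('v,'e,'g) bidx option"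
  where
  "word_act [] p = p"
| "word_act (x # w) p = act_step x (word_act w p)"

lemma word_act_append: "word_act (u @ w) p = word_act u (word_act w p)"
  by (induction u) auto

lemma word_act_scale_state: "word_act w (scale_state b p) = scale_state b (word_act w p)"
  by (induction w) (auto simp: act_step_def scale_state_def mult.assoc)

lemma word_act_same_vector: "same_vector p q \<Longrightarrow> same_vector (word_act w p) (word_act w q)"
proof -
  have "fst p = 0 \<Longrightarrow> fst (word_act w p) = 0" for p
    by (induction w) (auto simp: act_step_def)
  then show "same_vector p q \<Longrightarrow> same_vector (word_act w p) (word_act w q)"
    unfolding same_vector_def by blast
qed

definition valid_state :: "('v,'e,'g) bidx option \<Rightarrow> bool" where
  "valid_state m = (case m of None \<Rightarrow> True | Some t \<Rightarrow> t \<in> basis_idx r s av)"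

lemma valid_state_Some: "valid_state (Some ((w, es), g, (u, bs))) \<longleftrightarrow>
    is_path r s (w, es) \<and> is_path r s (u, bs) \<and> av g (prange r (u, bs)) = prange r (w, es)"
  unfolding valid_state_def basis_idx_def by simp

lemma valid_state_cases:
  assumes "valid_state m"
  obtains (None) "m = None"
  | (Some) w es g u bs where "m = Some ((w, es), g, (u, bs))" "is_path r s (w, es)" "is_path r s (u, bs)"
      "av g (prange r (u, bs)) = prange r (w, es)"
proof (cases m)
  case (Some t)
  moreover obtain w es g u bs where "t = ((w, es), g, (u, bs))" by (metis prod.exhaust)
  ultimately show ?thesis using that assms valid_state_Some by auto
qed (use that in simp)

lemma gen_act_valid:
  assumes "valid_state m"
  shows "\<exists>t. snd (gen_act x m) = Some t \<and> valid_state (Some t)"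
  using assms
proof (cases rule: valid_state_cases)
  case None
  then show ?thesis by (cases x) (auto simp: valid_state_Some is_path_iff prange_eq)
next
  case (Some w es g u bs)
  note R = Some(2-4)
  show ?thesis
  proof (cases x)
    case (Ed e)
    then show ?thesis using Some by (cases es) (auto simp: valid_state_Some is_path_iff prange_eq)
  next
    case (Ghost e)
    show ?thesis
    proof (cases es)
      case Nil
      have "is_path r s (u, bs @ [ae (- g) e])" if "w = s e"
        using R Nil that
        by (auto simp: is_path_iff prange_eq edge_chain_snoc hd_append dest: av_eq_minus split: if_splits)
      then show ?thesis using Some Nil Ghost by (auto simp: valid_state_Some prange_eq is_path_iff)
    next
      case (Cons e1 es1)
      then show ?thesis using Some Ghost
        by (cases es1) (auto simp: valid_state_Some is_path_iff prange_eq)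
    qed
  next
    case (VG v h)
    have "is_path r s (v, path_act h es)" if "v = av h w"
      using R that by (auto simp: is_path_iff hd_path_act edge_chain_path_act)
    moreover have "av (path_phi h es + g) (prange r (u, bs)) = prange r (v, path_act h es)" if "v = av h w"
      using R that by (auto simp: av_add prange_eq r_last_path_act)
    ultimately show ?thesis using Some VG by (auto simp: valid_state_Some)
  qed
qed

lemma word_act_valid: "valid_state (snd p) \<Longrightarrow> valid_state (snd (word_act w p))"
proof (induction w)
  case (Cons x w)
  then show ?case using gen_act_valid[of "snd (word_act w p)" x] by (auto simp: act_step_def)
qed simp

end

section \<open>Linear independence\<close>

lemma if_mono_fzero: "(if P then Defs.mono 1 w else fzero) = Defs.mono (if P then 1 else 0) w"
  by (auto simp: fzero_def Defs.mono_def)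

lemma if_fsmult_mono_fzero:
  "(if P then fsmult a (Defs.mono 1 w) else fzero) = Defs.mono (if P then a else 0) w"
  by (auto simp: fzero_def fsmult_def Defs.mono_def)

lemma sum_support_superset:
  fixes x :: "'a \<Rightarrow> 'l::comm_ring_1"
  assumes "finite S" "{w. x w \<noteq> 0} \<subseteq> S"
  shows "(\<Sum>w\<in>{w. x w \<noteq> 0}. x w * f w) = (\<Sum>w\<in>S. x w * f w)"
  using assms by (intro sum.mono_neutral_left) auto

lemma sum_mono_mult:
  fixes f :: "_ \<Rightarrow> 'l::comm_ring_1"
  assumes "finite S" "u \<in> S"
  shows "(\<Sum>w\<in>S. Defs.mono a u w * f w) = a * f u"
proof -
  have "(\<Sum>w\<in>S. Defs.mono a u w * f w) = (\<Sum>w\<in>S. if w = u then a * f u else 0)"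
    by (rule sum.cong) (auto simp: Defs.mono_def)
  with assms show ?thesis by (simp add: sum.delta')
qed

context twisted_EP
begin

definition act_equiv :: "('v,'e,'g) cgen list \<Rightarrow> 'l \<Rightarrow> ('v,'e,'g) cgen list \<Rightarrow> bool" where
  "act_equiv w b w' \<longleftrightarrow>
     (\<forall>m. valid_state m \<longrightarrow> same_vector (word_act w (1, m)) (scale_state b (word_act w' (1, m))))"

lemmas act_simps = act_step_def scale_state_def same_vector_def

lemma act_equiv_rel1: "act_equiv [Ed e] 1 [VG (s e) 0, Ed e, VG (r e) 0]"
  unfolding act_equiv_def by (intro allI impI, erule valid_state_cases) (auto simp: act_simps)

lemma act_equiv_rel2: "act_equiv [Ghost e] 1 [VG (r e) 0, Ghost e, VG (s e) 0]"
  unfolding act_equiv_def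
  by (intro allI impI, erule valid_state_cases) (auto simp: act_simps is_path_iff split: list.splits)

lemma act_equiv_rel3: "act_equiv [Ghost e, Ed f] (if e = f then 1 else 0) [VG (r e) 0]"
  unfolding act_equiv_def by (intro allI impI, erule valid_state_cases) (auto simp: act_simps)

lemma act_equiv_rel4: "act_equiv [VG v g, VG w h] (if v = av g w then 1 else 0) [VG v (g + h)]"
  unfolding act_equiv_def
  by (intro allI impI, erule valid_state_cases)
    (auto simp: act_simps minus_add av_add av_diff av_inj path_act_add path_phi_add path_c_add add.assoc)

lemma act_equiv_rel5: "act_equiv [VG v g, Ed e]
    (if v = av g (s e) then c g e else 0) [Ed (ae g e), VG (r (ae g e)) (phi g e)]"
  unfolding act_equiv_def
  by (intro allI impI, erule valid_state_cases) (auto simp: act_simps av_inj av_diff)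

lemma act_equiv_rel6: "act_equiv [Ghost e, VG v g]
    (if v = s e then c g (ae (-g) e) else 0) [VG (r e) (phi g (ae (-g) e)), Ghost (ae (-g) e)]"
  unfolding act_equiv_def
proof (intro allI impI)
  define e0 where "e0 = ae (-g) e"
  have r_e: "r e = av (phi g e0) (r e0)" unfolding e0_def by simp
  fix m
  assume "valid_state m"
  then show "same_vector (word_act [Ghost e, VG v g] (1, m))
      (scale_state (if v = s e then c g e0 else 0) (word_act [VG (r e) (phi g e0), Ghost e0] (1, m)))"
  proof (cases rule: valid_state_cases)
    case None
    then show ?thesis by (auto simp: act_simps e0_def)
  next
    case (Some w es k u bs)
    show ?thesis
    proof (cases es)
      case Nil
      have "ae (-(g + k)) e = ae (-k) e0" unfolding e0_def by (simp add: minus_add ae_diff)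
      moreover have "phi (g + k) (ae (-k) e0) = phi g e0 + phi k (ae (-k) e0)" by (simp add: phi_add)
      moreover have "c (g + k) (ae (-k) e0) = c g e0 * c k (ae (-k) e0)" by (simp add: c_add)
      moreover have "(v = av g w \<and> v = s e) \<longleftrightarrow> (v = s e \<and> w = s e0)"
        unfolding e0_def by (auto dest: av_eq_minus)
      ultimately show ?thesis using Some(1) Nil r_e by (auto simp: act_simps)
    next
      case (Cons e1 es1)
      have w: "w = s e1" using Some(2) Cons by (simp add: is_path_iff)
      have "(v = av g w \<and> e = ae g e1) \<longleftrightarrow> (v = s e \<and> e0 = e1)" unfolding e0_def w by auto
      then show ?thesis using Some(1) Cons w r_e by (auto simp: act_simps)
    qed
  qed
qed

lemma relator_act_equiv:
  "x \<in> cohn_relators r s av ae phi c \<Longrightarrow>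
     \<exists>w b w'. x = fdiff (Defs.mono 1 w) (Defs.mono b w') \<and> act_equiv w b w'"
proof (induction rule: cohn_relators.induct)
  case (rel1 e) then show ?case using act_equiv_rel1 by blast
next
  case (rel2 e) then show ?case using act_equiv_rel2 by blast
next
  case (rel3 e f) then show ?case unfolding if_mono_fzero using act_equiv_rel3 by blast
next
  case (rel4 v g w h) then show ?case unfolding if_mono_fzero using act_equiv_rel4 by blast
next
  case (rel5 v g e) then show ?case unfolding if_fsmult_mono_fzero using act_equiv_rel5 by blast
next
  case (rel6 e v g) then show ?case unfolding if_fsmult_mono_fzero using act_equiv_rel6 by blast
qed

definition normal_form :: "('v,'e,'g) cgen list \<Rightarrow> 'l \<times> ('v,'e,'g) bidx option" where
  "normal_form w = word_act w (1, None)"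

lemma act_equiv_normal_form_coeff:
  assumes "act_equiv w1 b w2"
  shows "state_coeff (normal_form (u @ w1 @ v)) t = b * state_coeff (normal_form (u @ w2 @ v)) t"
proof -
  obtain a m where am: "word_act v (1, None) = (a, m)" by (metis prod.exhaust)
  have "valid_state m" using word_act_valid[of "(1, None)" v] am by (simp add: valid_state_def)
  have "(a, m) = scale_state a (1, m)" by (simp add: scale_state_def)
  then have split: "normal_form (u @ w @ v) = word_act u (scale_state a (word_act w (1, m)))" for w
    unfolding normal_form_def word_act_append am by (simp only: word_act_scale_state)
  have "same_vector (word_act u (scale_state a (word_act w1 (1, m))))
      (word_act u (scale_state a (scale_state b (word_act w2 (1, m)))))"
    using assms \<open>valid_state m\<close> unfolding act_equiv_def
    by (intro word_act_same_vector same_vector_scale_state) auto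
  then have "state_coeff (normal_form (u @ w1 @ v)) t =
      state_coeff (word_act u (scale_state a (scale_state b (word_act w2 (1, m))))) t"
    unfolding split by (rule state_coeff_same_vector)
  also have "scale_state a (scale_state b (word_act w2 (1, m))) =
      scale_state b (scale_state a (word_act w2 (1, m)))"
    by (simp add: scale_state_def algebra_simps)
  finally show ?thesis unfolding split word_act_scale_state state_coeff_scale_state .
qed

definition nf_coeff_null :: "('v,'e,'g,'l) falg \<Rightarrow> bool" where
  "nf_coeff_null x \<longleftrightarrow> finite {w. x w \<noteq> 0} \<and>
     (\<forall>u v t. (\<Sum>w\<in>{w. x w \<noteq> 0}. x w * state_coeff (normal_form (u @ w @ v)) t) = 0)"

lemma nf_coeff_null_relator:
  assumes "x \<in> cohn_relators r s av ae phi c"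
  shows "nf_coeff_null x"
proof -
  obtain w1 b w2 where x: "x = fdiff (Defs.mono 1 w1) (Defs.mono b w2)" and "act_equiv w1 b w2"
    using relator_act_equiv[OF assms] by blast
  have supp: "{w. x w \<noteq> 0} \<subseteq> {w1, w2}" unfolding x by (auto simp: fdiff_def Defs.mono_def)
  show ?thesis unfolding nf_coeff_null_def
  proof (intro conjI allI)
    show "finite {w. x w \<noteq> 0}" using supp finite_subset by blast
    fix u v t
    let ?f = "\<lambda>w. state_coeff (normal_form (u @ w @ v)) t"
    have "(\<Sum>w\<in>{w. x w \<noteq> 0}. x w * ?f w) = (\<Sum>w\<in>{w1, w2}. x w * ?f w)"
      by (rule sum_support_superset[OF _ supp]) simp
    also have "\<dots> = (\<Sum>w\<in>{w1, w2}. Defs.mono 1 w1 w * ?f w) - (\<Sum>w\<in>{w1, w2}. Defs.mono b w2 w * ?f w)"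
      unfolding x fdiff_def by (simp add: left_diff_distrib sum_subtractf)
    also have "\<dots> = ?f w1 - b * ?f w2" by (simp add: sum_mono_mult)
    also have "\<dots> = 0" using act_equiv_normal_form_coeff[OF \<open>act_equiv w1 b w2\<close>] by simp
    finally show "(\<Sum>w\<in>{w. x w \<noteq> 0}. x w * ?f w) = 0" .
  qed
qed

lemma nf_coeff_null_fadd:
  assumes x: "nf_coeff_null x" and y: "nf_coeff_null y"
  shows "nf_coeff_null (fadd x y)"
proof -
  let ?S = "{w. x w \<noteq> 0} \<union> {w. y w \<noteq> 0}"
  have supp: "{w. fadd x y w \<noteq> 0} \<subseteq> ?S" by (auto simp: fadd_def)
  have fin: "finite ?S" using x y unfolding nf_coeff_null_def by simp
  show ?thesis unfolding nf_coeff_null_def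
  proof (intro conjI allI)
    show "finite {w. fadd x y w \<noteq> 0}" using supp fin finite_subset by blast
    fix u v t
    let ?f = "\<lambda>w. state_coeff (normal_form (u @ w @ v)) t"
    have "(\<Sum>w\<in>{w. fadd x y w \<noteq> 0}. fadd x y w * ?f w) = (\<Sum>w\<in>?S. fadd x y w * ?f w)"
      by (rule sum_support_superset[OF fin supp])
    also have "\<dots> = (\<Sum>w\<in>?S. x w * ?f w) + (\<Sum>w\<in>?S. y w * ?f w)"
      by (simp add: fadd_def distrib_right sum.distrib)
    also have "(\<Sum>w\<in>?S. x w * ?f w) = (\<Sum>w\<in>{w. x w \<noteq> 0}. x w * ?f w)"
      by (rule sum_support_superset[symmetric]) (use fin in auto)
    also have "(\<Sum>w\<in>?S. y w * ?f w) = (\<Sum>w\<in>{w. y w \<noteq> 0}. y w * ?f w)"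
      by (rule sum_support_superset[symmetric]) (use fin in auto)
    finally show "(\<Sum>w\<in>{w. fadd x y w \<noteq> 0}. fadd x y w * ?f w) = 0"
      using x y unfolding nf_coeff_null_def by simp
  qed
qed

lemma nf_coeff_null_sandwich:
  assumes x: "nf_coeff_null x"
  shows "nf_coeff_null (sandwich a u x v)"
proof -
  let ?y = "sandwich a u x v"
  let ?ctx = "\<lambda>w. u @ w @ v"
  have fin: "finite (?ctx ` {w. x w \<noteq> 0})" using x unfolding nf_coeff_null_def by simp
  have supp: "{w. ?y w \<noteq> 0} \<subseteq> ?ctx ` {w. x w \<noteq> 0}"
  proof
    fix w' assume "w' \<in> {w. ?y w \<noteq> 0}"
    then obtain w where w: "w' = u @ w @ v" and "?y w' \<noteq> 0" using sandwich_outside by blast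
    then have "x w \<noteq> 0" by (auto simp: sandwich_append)
    with w show "w' \<in> ?ctx ` {w. x w \<noteq> 0}" by blast
  qed
  have inj: "inj_on ?ctx {w. x w \<noteq> 0}" by (auto simp: inj_on_def)
  show ?thesis unfolding nf_coeff_null_def
  proof (intro conjI allI)
    show "finite {w. ?y w \<noteq> 0}" using supp fin finite_subset by blast
    fix u' v' t
    let ?f = "\<lambda>w. state_coeff (normal_form (u' @ w @ v')) t"
    have "(\<Sum>w\<in>{w. ?y w \<noteq> 0}. ?y w * ?f w) = (\<Sum>w\<in>?ctx ` {w. x w \<noteq> 0}. ?y w * ?f w)"
      by (rule sum_support_superset[OF fin supp])
    also have "\<dots> = (\<Sum>w\<in>{w. x w \<noteq> 0}. ?y (?ctx w) * ?f (?ctx w))"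
      by (rule sum.reindex[OF inj, unfolded comp_def])
    also have "\<dots> = a * (\<Sum>w\<in>{w. x w \<noteq> 0}. x w * state_coeff (normal_form ((u' @ u) @ w @ (v @ v'))) t)"
      by (simp add: sandwich_append sum_distrib_left mult.assoc)
    also have "(\<Sum>w\<in>{w. x w \<noteq> 0}. x w * state_coeff (normal_form ((u' @ u) @ w @ (v @ v'))) t) = 0"
      using x unfolding nf_coeff_null_def by blast
    finally show "(\<Sum>w\<in>{w. ?y w \<noteq> 0}. ?y w * ?f w) = 0" by simp
  qed
qed

lemma cohn_ideal_nf_coeff_null: "x \<in> cohn_ideal r s av ae phi c \<Longrightarrow> nf_coeff_null x"
  unfolding cohn_ideal_def
proof (induction rule: ideal_gen.induct)
  case zero
  then show ?case unfolding nf_coeff_null_def by (simp add: fzero_def)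
qed (auto simp: nf_coeff_null_relator nf_coeff_null_fadd nf_coeff_null_sandwich
          sandwich_def[symmetric])

definition basis_word :: "('v,'e,'g) bidx \<Rightarrow> ('v,'e,'g) cgen list" where
  "basis_word t = (case t of (a, g, b) \<Rightarrow> pword a @ [VG (prange r a) g] @ pword_star b)"

lemma basis_word_eq:
  "basis_word ((w, es), g, b) = pword (w, es) @ [VG (prange r (w, es)) g] @ pword_star b"
  unfolding basis_word_def by simp

lemma basis_elt_eq_mono: "basis_elt r t = Defs.mono 1 (basis_word t)"
  unfolding basis_elt_def basis_word_def
  by (auto simp: sandwich_def[symmetric] sandwich_mono split: prod.splits)

lemma word_act_ghosts:
  "edge_chain bs \<Longrightarrow> bs \<noteq> [] \<Longrightarrow>
     word_act (rev (map Ghost bs)) (1, None) = (1, Some ((r (last bs), []), 0, (s (hd bs), bs)))"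
proof (induction bs rule: rev_induct)
  case (snoc e bs)
  show ?case
  proof (cases "bs = []")
    case False
    then have "edge_chain bs" "r (last bs) = s e" using snoc.prems edge_chain_snoc by auto
    with snoc.IH False show ?thesis by (simp add: act_step_def)
  qed (simp add: act_step_def)
qed simp

lemma word_act_edges:
  "edge_chain es \<Longrightarrow> es \<noteq> [] \<Longrightarrow>
     word_act (map Ed es) (1, Some ((r (last es), []), g, b)) = (1, Some ((s (hd es), es), g, b))"
  by (induction es rule: edge_chain.induct) (simp_all add: act_step_def)

lemma normal_form_basis_word:
  assumes "t \<in> basis_idx r s av"
  shows "normal_form (basis_word t) = (1, Some t)"
proof -
  obtain w es g u bs where t: "t = ((w, es), g, (u, bs))" by (metis prod.exhaust)
  have path: "is_path r s (w, es)" "is_path r s (u, bs)"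
    and range: "av g (prange r (u, bs)) = prange r (w, es)"
    using assms t unfolding basis_idx_def by auto
  have "word_act (pword_star (u, bs)) (1, None) = (1, Some ((prange r (u, bs), []), 0, (u, bs)))"
    using path(2) word_act_ghosts[of bs] by (auto simp: pword_star_def prange_eq is_path_iff act_step_def)
  moreover have "word_act (pword (w, es)) (1, Some ((prange r (w, es), []), g, (u, bs))) = (1, Some t)"
    using path(1) word_act_edges[of es g "(u, bs)"] t
    by (cases "es = []") (auto simp: pword_def prange_eq act_step_def is_path_iff)
  ultimately show ?thesis
    unfolding normal_form_def t basis_word_eq using range by (simp add: word_act_append act_step_def)
qed

lemma lincomb_eq_sum:
  "finite K \<Longrightarrow> {t. k t \<noteq> 0} \<subseteq> K \<Longrightarrow> lincomb r k = (\<lambda>w. \<Sum>t\<in>K. k t * Defs.mono 1 (basis_word t) w)"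
  unfolding lincomb_def basis_elt_eq_mono by (intro ext sum.mono_neutral_left) auto

theorem basis_independent:
  assumes fin: "finite {t. k t \<noteq> 0}" and sub: "{t. k t \<noteq> 0} \<subseteq> basis_idx r s av"
    and ideal: "lincomb r k \<in> cohn_ideal r s av ae phi c"
  shows "k t = 0"
proof -
  let ?K = "{t. k t \<noteq> 0}"
  let ?L = "lincomb r k"
  let ?S = "basis_word ` ?K"
  have L: "?L = (\<lambda>w. \<Sum>t\<in>?K. k t * Defs.mono 1 (basis_word t) w)"
    using lincomb_eq_sum[OF fin order_refl] .
  have finS: "finite ?S" using fin by simp
  have supp: "{w. ?L w \<noteq> 0} \<subseteq> ?S"
  proof
    fix w assume "w \<in> {w. ?L w \<noteq> 0}"
    then have "(\<Sum>t\<in>?K. k t * Defs.mono 1 (basis_word t) w) \<noteq> 0" unfolding L by simp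
    then obtain t where "t \<in> ?K" "k t * Defs.mono 1 (basis_word t) w \<noteq> 0" by (meson sum.neutral)
    then show "w \<in> ?S" by (auto simp: Defs.mono_def split: if_splits)
  qed
  have "0 = (\<Sum>w\<in>{w. ?L w \<noteq> 0}. ?L w * state_coeff (normal_form ([] @ w @ [])) t)"
    using cohn_ideal_nf_coeff_null[OF ideal] unfolding nf_coeff_null_def by metis
  also have "\<dots> = (\<Sum>w\<in>?S. ?L w * state_coeff (normal_form w) t)"
    using sum_support_superset[OF finS supp] by simp
  also have "\<dots> = (\<Sum>w\<in>?S. \<Sum>t'\<in>?K. k t' * (Defs.mono 1 (basis_word t') w * state_coeff (normal_form w) t))"
    unfolding L by (simp add: sum_distrib_right mult.assoc)
  also have "\<dots> = (\<Sum>t'\<in>?K. k t' * (\<Sum>w\<in>?S. Defs.mono 1 (basis_word t') w * state_coeff (normal_form w) t))"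
    by (subst sum.swap) (simp add: sum_distrib_left)
  also have "\<dots> = (\<Sum>t'\<in>?K. k t' * state_coeff (normal_form (basis_word t')) t)"
    by (rule sum.cong) (auto simp: sum_mono_mult finS)
  also have "\<dots> = (\<Sum>t'\<in>?K. if t' = t then k t' else 0)"
    by (rule sum.cong) (use sub normal_form_basis_word in \<open>auto simp: state_coeff_def\<close>)
  also have "\<dots> = k t" using fin by (simp add: sum.delta)
  finally show ?thesis by simp
qed

section \<open>Spanning\<close>

abbreviation rel_cong :: "('v,'e,'g) cgen list \<Rightarrow> 'l \<Rightarrow> ('v,'e,'g) cgen list \<Rightarrow> bool" where
  "rel_cong \<equiv> word_cong (cohn_relators r s av ae phi c)"

lemma rel_cong_rel1: "rel_cong [Ed e] 1 [VG (s e) 0, Ed e, VG (r e) 0]"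
  by (rule word_cong_relator) (rule rel1)
lemma rel_cong_rel2: "rel_cong [Ghost e] 1 [VG (r e) 0, Ghost e, VG (s e) 0]"
  by (rule word_cong_relator) (rule rel2)
lemma rel_cong_rel3: "rel_cong [Ghost e, Ed f] (if e = f then 1 else 0) [VG (r e) 0]"
  by (rule word_cong_relator, rule rel3[unfolded if_mono_fzero])
lemma rel_cong_rel4: "rel_cong [VG v g, VG w h] (if v = av g w then 1 else 0) [VG v (g + h)]"
  by (rule word_cong_relator, rule rel4[unfolded if_mono_fzero])
lemma rel_cong_rel5: "rel_cong [VG v g, Ed e]
    (if v = av g (s e) then c g e else 0) [Ed (ae g e), VG (r (ae g e)) (phi g e)]"
  by (rule word_cong_relator, rule rel5[unfolded if_fsmult_mono_fzero])
lemma rel_cong_rel6: "rel_cong [Ghost e, VG v g] (if v = s e then c g (ae (-g) e) else 0)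
     [VG (r e) (phi g (ae (-g) e)), Ghost (ae (-g) e)]"
  by (rule word_cong_relator, rule rel6[unfolded if_fsmult_mono_fzero])

lemma vertex_idem: "rel_cong [VG v 0, VG v 0] 1 [VG v 0]"
  using rel_cong_rel4[of v 0 v 0] by simp
lemma vertex_mult_VG: "rel_cong [VG v 0, VG v h] 1 [VG v h]"
  using rel_cong_rel4[of v 0 v h] by simp

lemma edge_range_vertex: "rel_cong [Ed e, VG (r e) 0] 1 [Ed e]"
proof -
  have a: "rel_cong [Ed e, VG (r e) 0] 1 [VG (s e) 0, Ed e, VG (r e) 0, VG (r e) 0]"
    using word_cong_append_right[OF rel_cong_rel1[of e], of "[VG (r e) 0]"] by simp
  have b: "rel_cong [VG (s e) 0, Ed e, VG (r e) 0, VG (r e) 0] 1 [VG (s e) 0, Ed e, VG (r e) 0]"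
    using word_cong_append_left[OF vertex_idem[of "r e"], of "[VG (s e) 0, Ed e]"] by simp
  show ?thesis using word_cong_trans[OF a word_cong_trans[OF b word_cong_sym[OF rel_cong_rel1]]] by simp
qed

lemma source_vertex_edge: "rel_cong [VG (s e) 0, Ed e] 1 [Ed e]"
proof -
  have a: "rel_cong [VG (s e) 0, Ed e] 1 [VG (s e) 0, VG (s e) 0, Ed e, VG (r e) 0]"
    using word_cong_append_left[OF rel_cong_rel1[of e], of "[VG (s e) 0]"] by simp
  have b: "rel_cong [VG (s e) 0, VG (s e) 0, Ed e, VG (r e) 0] 1 [VG (s e) 0, Ed e, VG (r e) 0]"
    using word_cong_append_right[OF vertex_idem[of "s e"], of "[Ed e, VG (r e) 0]"] by simp
  show ?thesis using word_cong_trans[OF a word_cong_trans[OF b word_cong_sym[OF rel_cong_rel1]]] by simp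
qed

lemma ghost_source_vertex: "rel_cong [Ghost e, VG (s e) 0] 1 [Ghost e]"
proof -
  have a: "rel_cong [Ghost e, VG (s e) 0] 1 [VG (r e) 0, Ghost e, VG (s e) 0, VG (s e) 0]"
    using word_cong_append_right[OF rel_cong_rel2[of e], of "[VG (s e) 0]"] by simp
  have b: "rel_cong [VG (r e) 0, Ghost e, VG (s e) 0, VG (s e) 0] 1 [VG (r e) 0, Ghost e, VG (s e) 0]"
    using word_cong_append_left[OF vertex_idem[of "s e"], of "[VG (r e) 0, Ghost e]"] by simp
  show ?thesis using word_cong_trans[OF a word_cong_trans[OF b word_cong_sym[OF rel_cong_rel2]]] by simp
qed

lemma range_vertex_ghost: "rel_cong [VG (r e) 0, Ghost e] 1 [Ghost e]"
proof -
  have a: "rel_cong [VG (r e) 0, Ghost e] 1 [VG (r e) 0, VG (r e) 0, Ghost e, VG (s e) 0]"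
    using word_cong_append_left[OF rel_cong_rel2[of e], of "[VG (r e) 0]"] by simp
  have b: "rel_cong [VG (r e) 0, VG (r e) 0, Ghost e, VG (s e) 0] 1 [VG (r e) 0, Ghost e, VG (s e) 0]"
    using word_cong_append_right[OF vertex_idem[of "r e"], of "[Ghost e, VG (s e) 0]"] by simp
  show ?thesis using word_cong_trans[OF a word_cong_trans[OF b word_cong_sym[OF rel_cong_rel2]]] by simp
qed

lemma edge_vertex_zero: "r e \<noteq> w \<Longrightarrow> rel_cong [Ed e, VG w 0] 0 X"
proof -
  assume h: "r e \<noteq> w"
  have a: "rel_cong [Ed e, VG w 0] 1 [Ed e, VG (r e) 0, VG w 0]"
    using word_cong_append_right[OF word_cong_sym[OF edge_range_vertex[of e]], of "[VG w 0]"] by simp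
  have b: "rel_cong [Ed e, VG (r e) 0, VG w 0] 0 X"
    using word_cong_zero[of _ "[VG (r e) 0, VG w 0]" _ "[Ed e]" "[]"] rel_cong_rel4[of "r e" 0 w 0] h
    by simp
  show ?thesis using word_cong_trans[OF a b] by simp
qed

lemma edge_edge_zero: "r e \<noteq> s f \<Longrightarrow> rel_cong [Ed e, Ed f] 0 X"
proof -
  assume h: "r e \<noteq> s f"
  have a: "rel_cong [Ed e, Ed f] 1 [Ed e, VG (r e) 0, Ed f]"
    using word_cong_append_right[OF word_cong_sym[OF edge_range_vertex[of e]], of "[Ed f]"] by simp
  have b: "rel_cong [Ed e, VG (r e) 0, Ed f] 1 [Ed e, VG (r e) 0, VG (s f) 0, Ed f]"
    using word_cong_append_left[OF word_cong_sym[OF source_vertex_edge[of f]], of "[Ed e, VG (r e) 0]"]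
    by simp
  have z: "rel_cong [Ed e, VG (r e) 0, VG (s f) 0, Ed f] 0 X"
    using word_cong_zero[of _ "[VG (r e) 0, VG (s f) 0]" _ "[Ed e]" "[Ed f]"]
      rel_cong_rel4[of "r e" 0 "s f" 0] h
    by simp
  show ?thesis using word_cong_trans[OF a word_cong_trans[OF b z]] by simp
qed

lemma VG_mult_path:
  assumes "edge_chain es" "es \<noteq> []" "v = av h (s (hd es))"
  shows "rel_cong (VG v h # map Ed es) (path_c h es)
      (map Ed (path_act h es) @ [VG (r (last (path_act h es))) (path_phi h es)])"
  using assms
proof (induction es arbitrary: v h rule: edge_chain.induct)
  case (2 e)
  then show ?case using rel_cong_rel5[of v h e] by simp
next
  case (3 e1 e2 es)
  let ?h = "phi h e1" and ?es = "e2 # es"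
  have a: "rel_cong (VG v h # Ed e1 # map Ed ?es) (c h e1)
      (Ed (ae h e1) # VG (r (ae h e1)) ?h # map Ed ?es)"
    using word_cong_append_right[OF rel_cong_rel5[of v h e1], of "map Ed ?es"] "3.prems" by simp
  have b: "rel_cong (Ed (ae h e1) # VG (r (ae h e1)) ?h # map Ed ?es) (path_c ?h ?es)
      (Ed (ae h e1) # map Ed (path_act ?h ?es) @ [VG (r (last (path_act ?h ?es))) (path_phi ?h ?es)])"
    using "3.prems" by (intro word_cong_Cons "3.IH") auto
  show ?case using word_cong_trans[OF a b] by simp
qed simp_all

lemma gen_act_None_cong:
  assumes "gen_act x None = (a, Some t')"
  shows "rel_cong [x] a (basis_word t')"
proof (cases x)
  case (Ed e)
  have "rel_cong [Ed e] 1 [Ed e, VG (r e) 0]" by (rule word_cong_sym[OF edge_range_vertex])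
  moreover have "rel_cong [Ed e, VG (r e) 0] 1 [Ed e, VG (r e) 0, VG (r e) 0]"
    using word_cong_append_left[OF word_cong_sym[OF vertex_idem[of "r e"]], of "[Ed e]"] by simp
  ultimately have "rel_cong [Ed e] (1 * 1) [Ed e, VG (r e) 0, VG (r e) 0]" by (rule word_cong_trans)
  then show ?thesis using assms Ed by (auto simp: basis_word_eq pword_def pword_star_def prange_eq)
next
  case (Ghost e)
  have "rel_cong [Ghost e] 1 [VG (r e) 0, Ghost e]" by (rule word_cong_sym[OF range_vertex_ghost])
  moreover have "rel_cong [VG (r e) 0, Ghost e] 1 [VG (r e) 0, VG (r e) 0, Ghost e]"
    using word_cong_append_right[OF word_cong_sym[OF vertex_idem[of "r e"]], of "[Ghost e]"] by simp
  ultimately have "rel_cong [Ghost e] (1 * 1) [VG (r e) 0, VG (r e) 0, Ghost e]" by (rule word_cong_trans)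
  then show ?thesis using assms Ghost by (auto simp: basis_word_eq pword_def pword_star_def prange_eq)
next
  case (VG v h)
  have "rel_cong [VG v h] 1 [VG v h, VG (av (-h) v) 0]"
    using rel_cong_rel4[of v h "av (-h) v" 0] by (simp add: word_cong_sym)
  moreover have "rel_cong [VG v h, VG (av (-h) v) 0] 1 [VG v 0, VG v h, VG (av (-h) v) 0]"
    using word_cong_append_right[OF word_cong_sym[OF vertex_mult_VG[of v h]], of "[VG (av (-h) v) 0]"] by simp
  ultimately have "rel_cong [VG v h] (1 * 1) [VG v 0, VG v h, VG (av (-h) v) 0]" by (rule word_cong_trans)
  then show ?thesis using assms VG by (auto simp: basis_word_eq pword_def pword_star_def prange_eq)
qed

lemma gen_act_Ed_cong:
  assumes R: "is_path r s (w, es)" and h: "gen_act (Ed e) (Some ((w, es), g, b)) = (a, Some t')"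
  shows "rel_cong (Ed e # basis_word ((w, es), g, b)) a (basis_word t')"
proof (cases es)
  case Nil
  show ?thesis
  proof (cases "r e = w")
    case True
    have "rel_cong ([Ed e, VG (r e) 0] @ VG w g # pword_star b) 1 ([Ed e] @ VG w g # pword_star b)"
      by (rule word_cong_append_right[OF edge_range_vertex])
    then show ?thesis using h Nil True by (auto simp: basis_word_eq pword_def prange_eq)
  next
    case False
    have "rel_cong ([] @ [Ed e, VG w 0] @ VG w g # pword_star b) 0 (basis_word t')"
      by (rule word_cong_zero[OF edge_vertex_zero[OF False]])
    then show ?thesis using h Nil False by (auto simp: basis_word_eq pword_def prange_eq)
  qed
next
  case (Cons e1 es1)
  have w: "w = s e1" using R Cons by (simp add: is_path_iff)
  show ?thesis
  proof (cases "r e = w")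
    case True
    then show ?thesis using h Cons by (auto simp: basis_word_eq pword_def prange_eq word_cong_refl)
  next
    case False
    have "rel_cong ([] @ [Ed e, Ed e1] @ map Ed es1 @ VG (prange r (w, es)) g # pword_star b) 0 (basis_word t')"
      by (rule word_cong_zero[OF edge_edge_zero]) (use False w in simp)
    then show ?thesis using h Cons False by (auto simp: basis_word_eq pword_def)
  qed
qed

lemma gen_act_Ghost_vertex_cong:
  assumes path: "is_path r s (u, bs)" and range: "av g (prange r (u, bs)) = w"
    and act: "gen_act (Ghost e) (Some ((w, []), g, (u, bs))) = (a, Some t')"
  shows "rel_cong (Ghost e # basis_word ((w, []), g, (u, bs))) a (basis_word t')"
proof (cases "w = s e")
  case True
  define e0 where "e0 = ae (-g) e"
  define h where "h = phi g e0"
  let ?B = "pword_star (u, bs)"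
  let ?B' = "rev (map Ghost bs)"
  have at: "a = c g e0" "t' = ((r e, []), h, (u, bs @ [e0]))"
    using act True unfolding e0_def h_def by auto
  have s1: "rel_cong (Ghost e # VG w 0 # VG w g # ?B) 1 (Ghost e # VG w g # ?B)"
    using word_cong_append_right[OF ghost_source_vertex[of e], of "VG w g # ?B"] True by simp
  have s2: "rel_cong (Ghost e # VG w g # ?B) (c g e0) (VG (r e) h # Ghost e0 # ?B)"
    using word_cong_append_right[OF rel_cong_rel6[of e w g], of "?B"] True
    unfolding e0_def h_def by simp
  have s3: "rel_cong (VG (r e) h # Ghost e0 # ?B) 1 (VG (r e) h # Ghost e0 # ?B')"
  proof (cases "bs = []")
    case True
    have "u = s e0" using range \<open>w = s e\<close> True unfolding e0_def
      by (auto simp: prange_eq dest: av_eq_minus)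
    then show ?thesis
      using word_cong_append_left[OF ghost_source_vertex[of e0], of "[VG (r e) h]"] True
      by (simp add: pword_star_def)
  qed (simp add: pword_star_def word_cong_refl)
  have s4: "rel_cong (VG (r e) h # Ghost e0 # ?B') 1 (VG (r e) 0 # VG (r e) h # Ghost e0 # ?B')"
    using word_cong_append_right[OF word_cong_sym[OF vertex_mult_VG[of "r e" h]], of "Ghost e0 # ?B'"]
    by simp
  have "rel_cong (Ghost e # VG w 0 # VG w g # ?B) (c g e0) (VG (r e) 0 # VG (r e) h # Ghost e0 # ?B')"
    using word_cong_trans[OF s1 word_cong_trans[OF s2 word_cong_trans[OF s3 s4]]] by simp
  then show ?thesis using at by (simp add: basis_word_eq pword_def pword_star_def prange_eq)
next
  case False
  have "rel_cong ([] @ [Ghost e, VG w 0] @ VG w g # pword_star (u, bs)) 0 (basis_word t')"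
    by (rule word_cong_zero) (use rel_cong_rel6[of e w 0] False in simp)
  then show ?thesis using act False by (auto simp: basis_word_eq pword_def prange_eq)
qed

lemma gen_act_Ghost_edge_cong:
  assumes path: "is_path r s (w, e1 # es)"
    and act: "gen_act (Ghost e) (Some ((w, e1 # es), g, b)) = (a, Some t')"
  shows "rel_cong (Ghost e # basis_word ((w, e1 # es), g, b)) a (basis_word t')"
proof (cases "e = e1")
  case True
  let ?B = "VG (prange r (w, e1 # es)) g # pword_star b"
  have at: "a = 1" "t' = ((r e, es), g, b)" using act True by auto
  have s1: "rel_cong (Ghost e # Ed e1 # map Ed es @ ?B) 1 (VG (r e) 0 # map Ed es @ ?B)"
    using word_cong_append_right[OF rel_cong_rel3[of e e], of "map Ed es @ ?B"] True by simp
  show ?thesis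
  proof (cases es)
    case Nil
    then show ?thesis using s1 at True by (simp add: basis_word_eq pword_def prange_eq)
  next
    case (Cons e2 es2)
    have "r e = s e2" using path Cons True by (simp add: is_path_iff)
    then have s2: "rel_cong (VG (r e) 0 # Ed e2 # map Ed es2 @ ?B) 1 (Ed e2 # map Ed es2 @ ?B)"
      using word_cong_append_right[OF source_vertex_edge[of e2], of "map Ed es2 @ ?B"] by simp
    have "rel_cong (Ghost e # Ed e1 # Ed e2 # map Ed es2 @ ?B) 1 (VG (r e) 0 # Ed e2 # map Ed es2 @ ?B)"
      using s1 Cons by simp
    from word_cong_trans[OF this s2] show ?thesis using at Cons
      by (simp add: basis_word_eq pword_def prange_eq)
  qed
next
  case False
  have "rel_cong ([] @ [Ghost e, Ed e1] @ map Ed es @ VG (prange r (w, e1 # es)) g # pword_star b)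
      0 (basis_word t')"
    by (rule word_cong_zero) (use rel_cong_rel3[of e e1] False in simp)
  then show ?thesis using act False by (auto simp: basis_word_eq pword_def)
qed

lemma VG_mismatch_zero:
  assumes path: "is_path r s (w, es)" and mismatch: "v \<noteq> av h w"
  shows "rel_cong (VG v h # basis_word ((w, es), g, b)) 0 w'"
proof (cases es)
  case Nil
  have "rel_cong ([] @ [VG v h, VG w 0] @ VG w g # pword_star b) 0 w'"
    by (rule word_cong_zero) (use rel_cong_rel4[of v h w 0] mismatch in simp)
  then show ?thesis using Nil by (simp add: basis_word_eq pword_def prange_eq)
next
  case (Cons e1 es1)
  have "w = s e1" using path Cons by (auto simp: is_path_iff)
  then have "rel_cong ([] @ [VG v h, Ed e1] @ map Ed es1 @ VG (prange r (w, es)) g # pword_star b) 0 w'"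
    by (intro word_cong_zero) (use rel_cong_rel5[of v h e1] mismatch in simp)
  then show ?thesis using Cons by (simp add: basis_word_eq pword_def)
qed

lemma gen_act_VG_cong:
  assumes path: "is_path r s (w, es)"
    and act: "gen_act (VG v h) (Some ((w, es), g, b)) = (a, Some t')"
  shows "rel_cong (VG v h # basis_word ((w, es), g, b)) a (basis_word t')"
proof (cases "v = av h w")
  case True
  have at: "a = path_c h es" "t' = ((v, path_act h es), path_phi h es + g, b)" using act True by auto
  let ?B = "pword_star b"
  show ?thesis
  proof (cases es)
    case Nil
    have s1: "rel_cong (VG v h # VG w 0 # VG w g # ?B) 1 (VG v h # VG w g # ?B)"
      using word_cong_append_right[OF rel_cong_rel4[of v h w 0], of "VG w g # ?B"] True by simp
    have s2: "rel_cong (VG v h # VG w g # ?B) 1 (VG v (h + g) # ?B)"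
      using word_cong_append_right[OF rel_cong_rel4[of v h w g], of "?B"] True by simp
    have s3: "rel_cong (VG v (h + g) # ?B) 1 (VG v 0 # VG v (h + g) # ?B)"
      using word_cong_append_right[OF word_cong_sym[OF vertex_mult_VG[of v "h + g"]], of "?B"] by simp
    show ?thesis using word_cong_trans[OF s1 word_cong_trans[OF s2 s3]] at Nil
      by (simp add: basis_word_eq pword_def prange_eq)
  next
    case (Cons e1 es1)
    let ?x = "r (last (path_act h es))"
    have p: "rel_cong (VG v h # map Ed es) (path_c h es) (map Ed (path_act h es) @ [VG ?x (path_phi h es)])"
      using path True Cons by (intro VG_mult_path) (auto simp: is_path_iff)
    have s1: "rel_cong (VG v h # map Ed es @ VG (r (last es)) g # ?B) (path_c h es)
        (map Ed (path_act h es) @ [VG ?x (path_phi h es)] @ VG (r (last es)) g # ?B)"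
      using word_cong_append_right[OF p, of "VG (r (last es)) g # ?B"] by simp
    have "?x = av (path_phi h es) (r (last es))" using Cons by (simp add: r_last_path_act)
    then have s2: "rel_cong (map Ed (path_act h es) @ [VG ?x (path_phi h es), VG (r (last es)) g] @ ?B) 1
        (map Ed (path_act h es) @ [VG ?x (path_phi h es + g)] @ ?B)"
      using word_cong_context[OF rel_cong_rel4[of ?x "path_phi h es" "r (last es)" g]] by simp
    have "rel_cong (VG v h # map Ed es @ VG (r (last es)) g # ?B) (path_c h es)
        (map Ed (path_act h es) @ [VG ?x (path_phi h es + g)] @ ?B)"
      using word_cong_trans[OF s1[simplified] s2[simplified]] by simp
    then show ?thesis using at Cons by (simp add: basis_word_eq pword_def prange_eq)
  qed
next
  case False
  then show ?thesis using act VG_mismatch_zero[OF path False, of g b "basis_word t'"] by simp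
qed

lemma gen_act_cong:
  assumes "valid_state (Some t)" and act: "gen_act x (Some t) = (a, Some t')"
  shows "rel_cong (x # basis_word t) a (basis_word t')"
proof -
  obtain w es g u bs where t: "t = ((w, es), g, (u, bs))" by (metis prod.exhaust)
  have path: "is_path r s (w, es)" "is_path r s (u, bs)"
    and range: "av g (prange r (u, bs)) = prange r (w, es)"
    using assms t valid_state_Some by auto
  show ?thesis
  proof (cases x)
    case (Ghost e)
    show ?thesis
    proof (cases es)
      case Nil
      then show ?thesis using gen_act_Ghost_vertex_cong[OF path(2)] range act t Ghost
        by (simp add: prange_eq)
    next
      case Cons
      then show ?thesis using gen_act_Ghost_edge_cong path(1) act t Ghost by simp
    qed
  qed (use gen_act_Ed_cong[OF path(1)] gen_act_VG_cong[OF path(1)] act t in simp_all)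
qed

lemma normal_form_cong:
  assumes "w \<noteq> []"
  shows "\<exists>a t. normal_form w = (a, Some t) \<and> t \<in> basis_idx r s av \<and> rel_cong w a (basis_word t)"
  using assms
proof (induction w)
  case (Cons x w)
  show ?case
  proof (cases "w = []")
    case True
    obtain t where "snd (gen_act x None) = Some t" and t: "t \<in> basis_idx r s av"
      using gen_act_valid[of None x] by (auto simp: valid_state_def)
    then obtain a where act: "gen_act x None = (a, Some t)" by (metis prod.collapse)
    then show ?thesis
      using True t gen_act_None_cong[OF act] by (simp add: normal_form_def act_step_def)
  next
    case False
    then obtain b t where nf: "normal_form w = (b, Some t)" and t: "t \<in> basis_idx r s av"
      and cong: "rel_cong w b (basis_word t)"
      using Cons.IH by blast
    obtain t' where "snd (gen_act x (Some t)) = Some t'" and t': "t' \<in> basis_idx r s av"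
      using gen_act_valid[of "Some t" x] t by (auto simp: valid_state_def)
    then obtain a where act: "gen_act x (Some t) = (a, Some t')" by (metis prod.collapse)
    then have "rel_cong (x # basis_word t) a (basis_word t')"
      using t by (intro gen_act_cong) (auto simp: valid_state_def)
    then have "rel_cong (x # w) (b * a) (basis_word t')"
      by (rule word_cong_trans[OF word_cong_Cons[OF cong]])
    moreover have "normal_form (x # w) = (b * a, Some t')"
      using nf act by (simp add: normal_form_def act_step_def)
    ultimately show ?thesis using t' by blast
  qed
qed simp

lemma lincomb_group:
  assumes "finite S"
  shows "lincomb r (\<lambda>t. \<Sum>w\<in>{w \<in> S. T w = t}. f w) =
      (\<lambda>w'. \<Sum>w\<in>S. f w * Defs.mono 1 (basis_word (T w)) w')"
proof
  fix w'
  let ?k = "\<lambda>t. \<Sum>w\<in>{w \<in> S. T w = t}. f w"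
  have "?k t = 0" if "t \<notin> T ` S" for t
  proof -
    have "{w \<in> S. T w = t} = {}" using that by auto
    then show ?thesis by (simp only: sum.empty)
  qed
  then have "{t. ?k t \<noteq> 0} \<subseteq> T ` S" by blast
  then have "lincomb r ?k w' = (\<Sum>t\<in>T ` S. ?k t * Defs.mono 1 (basis_word t) w')"
    using assms by (subst lincomb_eq_sum[of "T ` S"]) auto
  also have "\<dots> = (\<Sum>t\<in>T ` S. \<Sum>w\<in>{w \<in> S. T w = t}. f w * Defs.mono 1 (basis_word (T w)) w')"
    by (auto simp: sum_distrib_right intro: sum.cong)
  also have "\<dots> = (\<Sum>w\<in>S. f w * Defs.mono 1 (basis_word (T w)) w')"
    using assms by (intro sum.group) auto
  finally show "lincomb r ?k w' = (\<Sum>w\<in>S. f w * Defs.mono 1 (basis_word (T w)) w')" .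
qed

theorem basis_spanning:
  fixes x :: "('v,'e,'g,'l) falg"
  assumes fin: "finite {w. x w \<noteq> 0}" and "x [] = 0"
  shows "\<exists>k. finite {t. k t \<noteq> 0} \<and> {t. k t \<noteq> 0} \<subseteq> basis_idx r s av \<and>
            fdiff x (lincomb r k) \<in> cohn_ideal r s av ae phi c"
proof -
  let ?S = "{w. x w \<noteq> 0}"
  define a where "a w = fst (normal_form w)" for w
  define T where "T w = the (snd (normal_form w))" for w
  have nf: "T w \<in> basis_idx r s av \<and> rel_cong w (a w) (basis_word (T w))" if "w \<in> ?S" for w
  proof -
    have "w \<noteq> []" using that \<open>x [] = 0\<close> by auto
    then show ?thesis unfolding a_def T_def using normal_form_cong by force
  qed
  define k where "k t = (\<Sum>w\<in>{w \<in> ?S. T w = t}. x w * a w)" for t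
  have "k t = 0" if "t \<notin> T ` ?S" for t
  proof -
    have "{w \<in> ?S. T w = t} = {}" using that by auto
    then show ?thesis unfolding k_def by (simp only: sum.empty)
  qed
  then have supp: "{t. k t \<noteq> 0} \<subseteq> T ` ?S" by blast
  have "fdiff x (lincomb r k) \<in> cohn_ideal r s av ae phi c"
    unfolding k_def lincomb_group[OF fin] cohn_ideal_def
    using fin nf by (intro fdiff_sum_word_cong_in_ideal_gen) auto
  moreover have "finite {t. k t \<noteq> 0}" using supp fin finite_subset by blast
  moreover have "{t. k t \<noteq> 0} \<subseteq> basis_idx r s av" using supp nf by auto
  ultimately show ?thesis by blast
qed

end

theorem corollary3p2:
  fixes r s :: "'e \<Rightarrow> 'v" and av :: "'g::group_add \<Rightarrow> 'v \<Rightarrow> 'v" and ae :: "'g \<Rightarrow> 'e \<Rightarrow> 'e"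
    and phi :: "'g \<Rightarrow> 'e \<Rightarrow> 'g" and c :: "'g \<Rightarrow> 'e \<Rightarrow> 'l::comm_ring_1"
  assumes "twisted_EP_tuple r s av ae phi c"
  shows "(\<forall>x :: ('v,'e,'g,'l) falg. finite {w. x w \<noteq> 0} \<and> x [] = 0 \<longrightarrow>
            (\<exists>k. finite {t. k t \<noteq> 0} \<and> {t. k t \<noteq> 0} \<subseteq> basis_idx r s av \<and>
                 fdiff x (lincomb r k) \<in> cohn_ideal r s av ae phi c))
       \<and> (\<forall>k. finite {t. k t \<noteq> 0} \<and> {t. k t \<noteq> 0} \<subseteq> basis_idx r s av \<and>
                 lincomb r k \<in> cohn_ideal r s av ae phi c \<longrightarrow> (\<forall>t. k t = 0))"
proof -
  interpret twisted_EP r s av ae phi c by (rule twisted_EP.intro) (rule assms)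
  show ?thesis using basis_spanning basis_independent by blast
qed

end
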